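(* Let $\mathcal{P}=[0,1]^n\cap K$ be a polytope, where $K$ is an affine subspace of $\mathbb{R}^n$. Let $v$ be a vertex of $\mathcal{P}$ and let $F$ be a facet of $\mathcal{P}$ that does not contain $v$. Then there exists a coordinate $i\in[n]$ such that either $v_i>0$ and $x_i=0$ for all $x\in F$, or $v_i<1$ and $x_i=1$ for all $x\in F$. *)

theory Defs
  imports "HOL-Analysis.Analysis"
begin

definition unit_cube :: "(real ^ 'n) set" where
  "unit_cube = {x. \<forall>i. 0 \<le> x $ i \<and> x $ i \<le> 1}"

end

theory Submission
  imports Defs
begin

(* Pick z in the relative interior of F. A coordinate at a bound 0 or 1 in z is at that bound
   on all of F, so if the claim failed, v would share every saturated coordinate of z. Then the
   segment from v through z can be prolonged slightly beyond z inside the cube, and inside K by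
   affinity; since F is a face containing the interior point z of that segment, v would lie in F. *)

lemma supporting_hyperplane_through_rel_interior:
  fixes S :: "'a::real_inner set"
  assumes "convex S" and le: "\<And>x. x \<in> S \<Longrightarrow> a \<bullet> x \<le> b"
    and z: "z \<in> rel_interior S" "a \<bullet> z = b" and x: "x \<in> S"
  shows "a \<bullet> x = b"
proof -
  have "(S \<inter> {x. a \<bullet> x = b}) face_of S"
    using \<open>convex S\<close> le by (rule face_of_Int_supporting_hyperplane_le)
  moreover have "z \<in> (S \<inter> {x. a \<bullet> x = b}) \<inter> rel_interior S"
    using z rel_interior_subset by blast
  ultimately have "S \<subseteq> S \<inter> {x. a \<bullet> x = b}"
    by (metis subset_of_face_of empty_iff order_refl)
  with x show ?thesis by blast
qed

lemma rel_interior_saturated_coordinate: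
  fixes S :: "(real ^ 'n) set"
  assumes "convex S" "S \<subseteq> unit_cube" "z \<in> rel_interior S" "x \<in> S"
  shows "z $ i = 0 \<Longrightarrow> x $ i = 0" and "z $ i = 1 \<Longrightarrow> x $ i = 1"
proof -
  have bounds: "0 \<le> y $ i" "y $ i \<le> 1" if "y \<in> S" for y
    using that \<open>S \<subseteq> unit_cube\<close> unfolding unit_cube_def by auto
  show "z $ i = 0 \<Longrightarrow> x $ i = 0"
    using supporting_hyperplane_through_rel_interior[OF \<open>convex S\<close>, of "- axis i 1" 0 z x]
      assms(3,4) bounds by (simp add: inner_axis')
  show "z $ i = 1 \<Longrightarrow> x $ i = 1"
    using supporting_hyperplane_through_rel_interior[OF \<open>convex S\<close>, of "axis i 1" 1 z x]
      assms(3,4) bounds by (simp add: inner_axis')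
qed

lemma eventually_prolongation_in_unit_interval:
  fixes a b :: real
  assumes "0 \<le> a" "a \<le> 1" "a = 0 \<Longrightarrow> b = 0" "a = 1 \<Longrightarrow> b = 1"
  shows "\<forall>\<^sub>F e in at_right 0. 0 \<le> a + e * (a - b) \<and> a + e * (a - b) \<le> 1"
proof (cases "a = 0 \<or> a = 1")
  case True
  then show ?thesis using assms by auto
next
  case False
  then have "0 < a" "a < 1" using assms(1,2) by auto
  moreover have lim: "((\<lambda>e. a + e * (a - b)) \<longlongrightarrow> a) (at_right 0)"
    by (auto intro!: tendsto_eq_intros)
  ultimately have "\<forall>\<^sub>F e in at_right 0. 0 < a + e * (a - b)"
    and "\<forall>\<^sub>F e in at_right 0. a + e * (a - b) < 1"
    by (auto intro: order_tendstoD[OF lim])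
  then show ?thesis
    by eventually_elim auto
qed

lemma unit_cube_prolongation:
  fixes z v :: "real ^ 'n"
  assumes "z \<in> unit_cube"
    and "\<And>i. z $ i = 0 \<Longrightarrow> v $ i = 0" "\<And>i. z $ i = 1 \<Longrightarrow> v $ i = 1"
  shows "\<exists>d>0. z + d *\<^sub>R (z - v) \<in> unit_cube"
proof -
  have "\<forall>\<^sub>F d in at_right 0. \<forall>i. 0 \<le> z $ i + d * (z $ i - v $ i) \<and> z $ i + d * (z $ i - v $ i) \<le> 1"
    using assms unfolding unit_cube_def
    by (intro eventually_all_finite eventually_prolongation_in_unit_interval) auto
  then have "\<forall>\<^sub>F d in at_right 0. d > 0 \<and> z + d *\<^sub>R (z - v) \<in> unit_cube"
    using eventually_at_right_less by (eventually_elim) (simp add: unit_cube_def)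
  then show ?thesis
    by (auto dest: eventually_happens)
qed

lemma mem_open_segment_prolongation:
  fixes v z :: "'a::real_vector"
  assumes "v \<noteq> z" "d > 0"
  shows "z \<in> open_segment v (z + d *\<^sub>R (z - v))"
proof -
  define t where "t = 1 / (1 + d)"
  have t: "0 < t" "t < 1" "t * (1 + d) = 1" using \<open>d > 0\<close> by (auto simp: t_def)
  have "(1 - t) *\<^sub>R v + t *\<^sub>R (z + d *\<^sub>R (z - v)) = (t * (1 + d)) *\<^sub>R z + (1 - t * (1 + d)) *\<^sub>R v"
    by (simp add: algebra_simps)
  also have "\<dots> = z" using t by simp
  finally have "z = (1 - t) *\<^sub>R v + t *\<^sub>R (z + d *\<^sub>R (z - v))" ..
  moreover have "z + d *\<^sub>R (z - v) - v = (1 + d) *\<^sub>R (z - v)"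
    by (simp add: algebra_simps)
  then have "v \<noteq> z + d *\<^sub>R (z - v)"
    using assms by force
  ultimately show ?thesis
    using t unfolding in_segment by blast
qed

lemma mem_face_of_unit_cube_Int_affine:
  fixes K F :: "(real ^ 'n) set"
  assumes "affine K" "F face_of (unit_cube \<inter> K)" "z \<in> F" "v \<in> unit_cube \<inter> K"
    and "\<And>i. z $ i = 0 \<Longrightarrow> v $ i = 0" "\<And>i. z $ i = 1 \<Longrightarrow> v $ i = 1"
  shows "v \<in> F"
proof (cases "v = z")
  case False
  have zP: "z \<in> unit_cube \<inter> K" using assms(2,3) face_of_imp_subset by blast
  obtain d where "d > 0" and w_cube: "z + d *\<^sub>R (z - v) \<in> unit_cube"
    using unit_cube_prolongation zP assms(5,6) by blast
  have "(1 + d) *\<^sub>R z + (- d) *\<^sub>R v \<in> K"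
    using \<open>affine K\<close> zP assms(4) by (intro mem_affine) auto
  then have "z + d *\<^sub>R (z - v) \<in> K"
    by (simp add: algebra_simps)
  then show ?thesis
    using face_ofD[OF assms(2) mem_open_segment_prolongation[OF False \<open>d > 0\<close>]]
      assms(3,4) w_cube by blast
qed (use assms(3) in simp)

theorem lemma13:
  fixes K :: "(real ^ 'n) set" and v :: "real ^ 'n" and F :: "(real ^ 'n) set"
  assumes "affine K"
    and "v extreme_point_of (unit_cube \<inter> K)"
    and "F facet_of (unit_cube \<inter> K)"
    and "v \<notin> F"
  shows "\<exists>i. (v $ i > 0 \<and> (\<forall>x\<in>F. x $ i = 0)) \<or> (v $ i < 1 \<and> (\<forall>x\<in>F. x $ i = 1))"
proof (rule ccontr)
  assume neg: "\<not> ?thesis"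
  have face: "F face_of (unit_cube \<inter> K)" and "F \<noteq> {}"
    using assms(3) unfolding facet_of_def by auto
  have "convex F" and F_cube: "F \<subseteq> unit_cube"
    using face face_of_imp_convex face_of_imp_subset by blast+
  obtain z where z: "z \<in> rel_interior F"
    using rel_interior_eq_empty \<open>convex F\<close> \<open>F \<noteq> {}\<close> by blast
  have v: "v \<in> unit_cube \<inter> K"
    using assms(2) unfolding extreme_point_of_def by auto
  then have v_bounds: "0 \<le> v $ i" "v $ i \<le> 1" for i
    unfolding unit_cube_def by auto
  have "v \<in> F"
  proof (rule mem_face_of_unit_cube_Int_affine[OF assms(1) face _ v])
    show "z \<in> F" using z rel_interior_subset by blast
    show "v $ i = 0" if "z $ i = 0" for i
      using neg v_bounds[of i] rel_interior_saturated_coordinate(1)[OF \<open>convex F\<close> F_cube z _ that]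
      by force
    show "v $ i = 1" if "z $ i = 1" for i
      using neg v_bounds[of i] rel_interior_saturated_coordinate(2)[OF \<open>convex F\<close> F_cube z _ that]
      by force
  qed
  with assms(4) show False ..
qed

end
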